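(* Let $0<\beta<1$, $T>0$, $n_T$ a positive integer, $\tau=T/n_T$, $t_k=k\tau$. Let $\varpi_j$ be defined by $(1-z)^\beta=\sum_{j\ge0}\varpi_j z^j$, $\varrho_j$ by $(1-z)^{-\beta}=\sum_{j\ge0}\varrho_jz^j$, $P_j:=\tau^\beta\varrho_j$, and for a sequence $w^0,\dots,w^{n_T}$ let $D_\tau^{(\beta)}w^k=\tau^{-\beta}\sum_{j=0}^k\varpi_{k-j}(w^j-w^0)$. Let $\{g^k\}_{k=0}^{n_T}$ and $\{\lambda_l\}_{l=0}^{n_T-1}$ be non-negative sequences, and assume there is a constant $\lambda$ independent of $\tau$ with $\lambda\ge\sum_{l=0}^{k-1}\lambda_l$ for $1\le k\le n_T$ and $\tau\le 1/\sqrt[\beta]{2\lambda(1+\beta)}$. Then for any non-negative sequence $\{v^k\}_{k=0}^{n_T}$ satisfying $$D_\tau^{(\beta)}v^k\le\sum_{l=1}^k\lambda_{k-l}v^l+g^k,\qquad 1\le k\le n_T,$$ it holds that $$v^k\le 2E_\beta(2\lambda t_k^\beta)\Big(v^0+\max_{1\le m\le k}\sum_{j=0}^mP_{m-j}\,g^{j}\Big),\qquad 1\le k\le n_T,$$ where $E_\beta(z)=\sum_{l=0}^\infty\frac{z^l}{\Gamma(1+l\beta)}$. *)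

theory Defs
  imports "HOL-Analysis.Analysis"
begin

text \<open>Coefficients of (1-z)^beta = sum varpi_j z^j (generalized binomial series).\<close>
definition varpi :: "real \<Rightarrow> nat \<Rightarrow> real" where
  "varpi \<beta> j = (-1) ^ j * (\<beta> gchoose j)"

text \<open>Coefficients of (1-z)^(-beta) = sum rho_j z^j.\<close>
definition rho :: "real \<Rightarrow> nat \<Rightarrow> real" where
  "rho \<beta> j = (-1) ^ j * ((- \<beta>) gchoose j)"

definition frac_diff :: "real \<Rightarrow> real \<Rightarrow> (nat \<Rightarrow> real) \<Rightarrow> nat \<Rightarrow> real" where
  "frac_diff \<beta> \<tau> w k = \<tau> powr (- \<beta>) * (\<Sum>j=0..k. varpi \<beta> (k - j) * (w j - w 0))"

definition mittag_leffler :: "real \<Rightarrow> real \<Rightarrow> real" where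
  "mittag_leffler \<beta> z = (\<Sum>l. z ^ l / Gamma (1 + real l * \<beta>))"

end

theory Submission
  imports Defs "HOL-Computational_Algebra.Formal_Power_Series"
begin

text \<open>
  Convolution with rho inverts D_tau^(beta), since the generating functions of varpi and rho are
  (1-z)^beta and (1-z)^(-beta). Applied to the hypothesis, with the memory term bounded by Lambda
  times the running maximum V of v, this bounds v^m, and hence V^m, by
  F + Lambda tau^beta sum_{i<m} rho_i V^(m-i), where F = v^0 + max_m sum_j P_(m-j) g^j.
  As rho_0 = 1 and Lambda tau^beta \<le> 1/2, the diagonal term is absorbed:
  V^n \<le> 2F + 2 Lambda tau^beta sum_{i=1}^{n-1} rho_i V^(n-i).
  Finally n \<mapsto> E_beta(2 Lambda t_n^beta) is a supersolution of this discrete Volterra inequality: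
  since rho_i \<le> i^(beta-1)/Gamma(beta), a comparison with a Beta integral shows that the discrete
  fractional integral maps the l-th term of the Mittag-Leffler series to at most its (l+1)-th
  term.
\<close>

lemma varpi_rho_convolution:
  "(\<Sum>i=0..m. varpi b i * rho b (m - i)) = (if m = 0 then 1 else 0)"
proof -
  have "(\<Sum>i=0..m. varpi b i * rho b (m - i)) = (\<Sum>i=0..m. (-1)^m * ((b gchoose i) * ((-b) gchoose (m - i))))"
  proof (rule sum.cong[OF refl])
    fix i assume "i \<in> {0..m}"
    then have "(-1::real) ^ i * (-1) ^ (m - i) = (-1) ^ m"
      by (simp add: power_add[symmetric])
    then show "varpi b i * rho b (m - i) = (-1)^m * ((b gchoose i) * ((-b) gchoose (m - i)))"
      unfolding varpi_def rho_def by (metis mult.assoc mult.left_commute)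
  qed
  also have "\<dots> = (-1)^m * ((b + -b) gchoose m)"
    by (simp add: sum_distrib_left[symmetric] gbinomial_Vandermonde)
  finally show ?thesis
    by (simp add: gbinomial_0_left)
qed

lemma rho_varpi_inversion:
  fixes d :: "nat \<Rightarrow> real"
  shows "(\<Sum>k=0..n. rho b (n - k) * (\<Sum>j=0..k. varpi b (k - j) * d j)) = d n"
proof -
  define P where "P = Abs_fps (rho b)"
  define Q where "Q = Abs_fps (varpi b)"
  define D where "D = Abs_fps d"
  have "Q * P = 1"
    by (rule fps_ext) (simp add: fps_mult_nth varpi_rho_convolution P_def Q_def)
  then have "fps_nth (D * Q * P) n = d n"
    by (simp add: mult.assoc D_def)
  moreover have "fps_nth (D * Q * P) n = (\<Sum>k=0..n. (\<Sum>j=0..k. d j * varpi b (k - j)) * rho b (n - k))"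
    by (simp add: fps_mult_nth P_def Q_def D_def)
  ultimately show ?thesis
    by (simp add: mult.commute)
qed

lemma frac_diff_inversion:
  assumes "\<tau> > 0"
  shows "\<tau> powr b * (\<Sum>k=1..m. rho b (m - k) * frac_diff b \<tau> w k) = w m - w 0"
proof -
  have scaled: "\<tau> powr b * frac_diff b \<tau> w k = (\<Sum>j=0..k. varpi b (k - j) * (w j - w 0))" for k
    using assms by (simp add: frac_diff_def powr_minus)
  have "\<tau> powr b * (\<Sum>k=1..m. rho b (m - k) * frac_diff b \<tau> w k)
      = (\<Sum>k=1..m. rho b (m - k) * (\<tau> powr b * frac_diff b \<tau> w k))"
    by (simp add: sum_distrib_left mult.left_commute)
  also have "\<dots> = (\<Sum>k=0..m. rho b (m - k) * (\<Sum>j=0..k. varpi b (k - j) * (w j - w 0)))"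
    by (simp add: scaled sum.atLeast_Suc_atMost[of 0 m] flip: One_nat_def)
  also have "\<dots> = w m - w 0"
    by (rule rho_varpi_inversion)
  finally show ?thesis .
qed

text \<open>Wendel's inequality, from the log-convexity of Gamma on [x, x + 1].\<close>
lemma Gamma_add_le_powr:
  fixes x t :: real
  assumes x: "x > 0" and t: "0 \<le> t" "t \<le> 1"
  shows "Gamma (x + t) \<le> Gamma x * x powr t"
proof -
  have "ln (Gamma ((1 - t) * x + t * (x + 1))) \<le> (1 - t) * ln (Gamma x) + t * ln (Gamma (x + 1))"
    using convex_onD[OF log_convex_Gamma_real, of t x "x + 1"] assms by (simp add: o_def)
  moreover have "ln (Gamma (x + 1)) = ln x + ln (Gamma x)"
    using x by (subst Gamma_plus1) (auto intro: ln_mult_pos)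
  ultimately have "ln (Gamma (x + t)) \<le> ln (Gamma x) + t * ln x"
    by (simp add: algebra_simps)
  then have "exp (ln (Gamma (x + t))) \<le> exp (ln (Gamma x) + t * ln x)"
    by simp
  then show ?thesis
    using x t by (simp add: exp_add powr_def)
qed

lemma Gamma_add_ge_half_powr:
  fixes x b :: real
  assumes x: "x \<ge> 1" and b: "0 \<le> b" "b \<le> 1"
  shows "Gamma x * x powr b / 2 \<le> Gamma (x + b)"
proof -
  have "(x + b) powr (1 - b) \<le> (2 * x) powr (1 - b)"
    by (rule powr_mono2) (use x b in auto)
  also have "\<dots> = 2 powr (1 - b) * x powr (1 - b)"
    using x by (simp add: powr_mult)
  also have "\<dots> \<le> 2 * x powr (1 - b)"
    by (rule mult_right_mono) (use b powr_le_cancel_iff[of 2 "1 - b" 1] in auto)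
  finally have pow: "(x + b) powr (1 - b) \<le> 2 * x powr (1 - b)" .
  have "x * Gamma x = Gamma (x + 1)"
    using x by (subst Gamma_plus1) auto
  also have "\<dots> = Gamma (x + b + (1 - b))"
    by simp
  also have "\<dots> \<le> Gamma (x + b) * (x + b) powr (1 - b)"
    by (rule Gamma_add_le_powr) (use x b in auto)
  also have "\<dots> \<le> Gamma (x + b) * (2 * x powr (1 - b))"
    by (rule mult_left_mono[OF pow]) (use x b in simp)
  finally show ?thesis
    using x by (simp add: powr_diff field_simps)
qed

lemma rho_eq_pochhammer: "rho b j = pochhammer b j / fact j"
  unfolding rho_def gbinomial_pochhammer by (simp add: power_mult_distrib[symmetric])

lemma rho_0 [simp]: "rho b 0 = 1"
  by (simp add: rho_def)

lemma rho_nonneg: "b > 0 \<Longrightarrow> rho b j \<ge> 0"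
  unfolding rho_eq_pochhammer by (simp add: pochhammer_pos less_imp_le)

lemma rho_le_powr:
  fixes b :: real
  assumes b: "0 < b" "b \<le> 1" and j: "j \<ge> 1"
  shows "rho b j \<le> real j powr (b - 1) / Gamma b"
proof -
  have "b \<notin> \<int>\<^sub>\<le>\<^sub>0"
    using b by (auto elim!: nonpos_Ints_cases)
  then have "rho b j = Gamma (real j + b) / Gamma b / fact j"
    by (simp add: rho_eq_pochhammer pochhammer_Gamma add.commute)
  also have "fact j = real j * Gamma (real j)"
    using j Gamma_fact[of "j - 1", where 'a = real] by (cases j) (auto simp: add.commute)
  also have "Gamma (real j + b) / Gamma b / (real j * Gamma (real j))
      \<le> Gamma (real j) * real j powr b / Gamma b / (real j * Gamma (real j))"
    using Gamma_add_le_powr[of "real j" b] Gamma_real_pos[of b] Gamma_real_pos[of "real j"] b j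
    by (intro divide_right_mono) auto
  also have "\<dots> = real j powr (b - 1) / Gamma b"
  proof -
    have "Gamma (real j) \<noteq> 0"
      using j by (intro less_imp_neq[symmetric] Gamma_real_pos) simp
    then show ?thesis
      using j by (simp add: powr_diff)
  qed
  finally show ?thesis .
qed

lemma has_integral_powr_Beta:
  fixes N a b :: real
  assumes N: "N > 0" and a: "a \<ge> 0" and b: "b > 0"
  shows "((\<lambda>s. (N - s) powr (b - 1) * s powr a) has_integral N powr (a + b) * Beta (a + 1) b) {0..N}"
proof -
  have "((\<lambda>t. t powr a * (1 - t) powr (b - 1)) has_integral Beta (a + 1) b) {0..1}"
    using has_integral_Beta_real[of "a + 1" b] a b by simp
  from has_integral_stretch_real[OF this, of "1 / N"] N
  have "((\<lambda>s. (s / N) powr a * (1 - s / N) powr (b - 1)) has_integral N * Beta (a + 1) b)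
      ((\<lambda>s. s / (1 / N)) ` {0..1})"
    by simp
  moreover have "(\<lambda>s. s / (1 / N)) ` {0..1} = {0..N}"
    using N by (auto simp: image_iff intro!: bexI[of _ "_ / N"] simp: field_simps)
  ultimately have "((\<lambda>s. N powr (a + b - 1) * ((s / N) powr a * (1 - s / N) powr (b - 1)))
      has_integral N powr (a + b - 1) * (N * Beta (a + 1) b)) {0..N}"
    by (intro has_integral_mult_right) simp
  moreover have "N powr (a + b - 1) * ((s / N) powr a * (1 - s / N) powr (b - 1))
      = (N - s) powr (b - 1) * s powr a" if "s \<in> {0..N}" for s
  proof -
    have "1 - s / N = (N - s) / N"
      using N by (simp add: field_simps)
    then have "(s / N) powr a * (1 - s / N) powr (b - 1)
        = s powr a / N powr a * ((N - s) powr (b - 1) / N powr (b - 1))"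
      using that N by (simp add: powr_divide)
    moreover have "N powr (a + b - 1) = N powr a * N powr (b - 1)"
      using powr_add[of N a "b - 1"] by (simp add: algebra_simps)
    ultimately show ?thesis
      using N by (simp add: field_simps)
  qed
  moreover have "N powr (a + b - 1) * (N * Beta (a + 1) b) = N powr (a + b) * Beta (a + 1) b"
    using N by (simp add: powr_diff field_simps)
  ultimately show ?thesis
    using has_integral_cong by (metis (no_types, lifting))
qed

lemma sum_le_integral_mono:
  fixes f :: "real \<Rightarrow> real"
  assumes "f integrable_on {0..real n}"
    and "\<And>s t. 0 \<le> s \<Longrightarrow> s \<le> t \<Longrightarrow> t < real n \<Longrightarrow> f s \<le> f t"
  shows "(\<Sum>k<n. f (real k)) \<le> integral {0..real n} f"
  using assms
proof (induction n)
  case 0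
  then show ?case by simp
next
  case (Suc n)
  have int_n: "f integrable_on {0..real n}"
    by (rule integrable_on_subinterval[OF Suc.prems(1)]) auto
  have int_step: "f integrable_on {real n..real n + 1}"
    by (rule integrable_on_subinterval[OF Suc.prems(1)]) auto
  \<comment> \<open>f is bounded below by f n on [n, n+1) and the endpoint n+1 is negligible\<close>
  have spiked: "((\<lambda>s. if s = real n + 1 then f (real n) else f s) has_integral integral {real n..real n + 1} f)
      {real n..real n + 1}"
    by (rule has_integral_spike_finite[of "{real n + 1}" _ _ f]) (use int_step in auto)
  have lower: "f (real n) \<le> (if s = real n + 1 then f (real n) else f s)" if "s \<in> {real n..real n + 1}" for s
    using that Suc.prems(2)[of "real n" s] by auto
  have step: "f (real n) \<le> integral {real n..real n + 1} f"
    using has_integral_le[OF _ spiked lower] has_integral_const_real[of "f (real n)" "real n" "real n + 1"]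
    by simp
  have "(\<Sum>k<Suc n. f (real k)) \<le> integral {0..real n} f + integral {real n..real n + 1} f"
    using Suc.IH[OF int_n] Suc.prems(2) step by fastforce
  also have "\<dots> = integral {0..real (Suc n)} f"
    using Henstock_Kurzweil_Integration.integral_combine[OF _ _ Suc.prems(1), of "real n"]
    by (simp add: add.commute)
  finally show ?case .
qed

lemma sum_powr_le_Beta:
  fixes a b :: real
  assumes n: "n \<ge> 1" and a: "a \<ge> 0" and b: "0 < b" "b < 1"
  shows "(\<Sum>i\<in>{1..<n}. real i powr (b - 1) * real (n - i) powr a) \<le> real n powr (a + b) * Beta (a + 1) b"
proof -
  define f where "f s = (real n - s) powr (b - 1) * s powr a" for s
  have f_int: "(f has_integral real n powr (a + b) * Beta (a + 1) b) {0..real n}"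
    unfolding f_def using n a b by (intro has_integral_powr_Beta) auto
  have f_mono: "f s \<le> f t" if "0 \<le> s" "s \<le> t" "t < real n" for s t
    unfolding f_def using that a b
    by (intro mult_mono powr_mono2' powr_mono2) auto
  have "(\<Sum>i\<in>{1..<n}. real i powr (b - 1) * real (n - i) powr a) = (\<Sum>k\<in>{1..<n}. f (real k))"
    by (subst sum.atLeastLessThan_rev) (auto simp: f_def intro!: sum.cong)
  also have "\<dots> \<le> (\<Sum>k<n. f (real k))"
    by (rule sum_mono2) (auto simp: f_def)
  also have "\<dots> \<le> integral {0..real n} f"
    using f_int f_mono by (intro sum_le_integral_mono) auto
  also have "\<dots> = real n powr (a + b) * Beta (a + 1) b"
    using f_int by (rule integral_unique)
  finally show ?thesis .
qed

text \<open>
  Discrete counterpart of the Riemann-Liouville identity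
  I^b (t^(l b) / Gamma (1 + l b)) = t^((l+1) b) / Gamma (1 + (l+1) b).
\<close>
lemma rho_convolution_powr_le:
  fixes b \<tau> :: real
  assumes b: "0 < b" "b < 1" and n: "n \<ge> 1" and \<tau>: "\<tau> > 0"
  shows "\<tau> powr b * (\<Sum>i\<in>{1..<n}. rho b i * ((real (n - i) * \<tau>) powr b) ^ l / Gamma (1 + real l * b))
         \<le> ((real n * \<tau>) powr b) ^ Suc l / Gamma (1 + real (Suc l) * b)"
proof -
  define a where "a = b * real l"
  have a: "a \<ge> 0"
    using b by (simp add: a_def)
  have power_eq: "((x * \<tau>) powr b) ^ m = x powr (b * real m) * \<tau> powr (b * real m)"
    if "x > 0" for x m
    using that \<tau> by (simp add: powr_powr powr_mult flip: powr_realpow)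
  have "(\<Sum>i\<in>{1..<n}. rho b i * ((real (n - i) * \<tau>) powr b) ^ l)
      = (\<Sum>i\<in>{1..<n}. rho b i * real (n - i) powr a) * \<tau> powr a"
    by (simp add: power_eq a_def sum_distrib_right mult.assoc)
  also have "\<dots> \<le> (\<Sum>i\<in>{1..<n}. real i powr (b - 1) / Gamma b * real (n - i) powr a) * \<tau> powr a"
    using b by (intro mult_right_mono sum_mono mult_right_mono rho_le_powr) auto
  also have "\<dots> \<le> real n powr (a + b) * Beta (a + 1) b / Gamma b * \<tau> powr a"
    using sum_powr_le_Beta[OF n a b] b
    by (intro mult_right_mono) (auto simp: sum_divide_distrib[symmetric] divide_right_mono)
  also have "\<dots> = real n powr (a + b) * \<tau> powr a * Gamma (a + 1) / Gamma (a + 1 + b)"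
    using b by (auto simp: Beta_def field_simps Gamma_eq_zero_iff)
  finally have convolution_le:
    "(\<Sum>i\<in>{1..<n}. rho b i * ((real (n - i) * \<tau>) powr b) ^ l)
      \<le> real n powr (a + b) * \<tau> powr a * Gamma (a + 1) / Gamma (a + 1 + b)" .
  have "\<tau> powr b * (\<Sum>i\<in>{1..<n}. rho b i * ((real (n - i) * \<tau>) powr b) ^ l / Gamma (1 + real l * b))
      = \<tau> powr b / Gamma (a + 1) * (\<Sum>i\<in>{1..<n}. rho b i * ((real (n - i) * \<tau>) powr b) ^ l)"
    by (simp add: sum_divide_distrib[symmetric] a_def add.commute mult.commute)
  also have "\<dots> \<le> \<tau> powr b / Gamma (a + 1) * (real n powr (a + b) * \<tau> powr a * Gamma (a + 1) / Gamma (a + 1 + b))"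
    using a by (intro mult_left_mono[OF convolution_le]) simp
  also have "\<dots> = real n powr (a + b) * \<tau> powr (a + b) / Gamma (a + 1 + b)"
    using a by (auto simp: powr_add field_simps Gamma_eq_zero_iff)
  also have "\<dots> = ((real n * \<tau>) powr b) ^ Suc l / Gamma (1 + real (Suc l) * b)"
    using power_eq[of "real n" "Suc l"] n by (simp add: a_def algebra_simps)
  finally show ?thesis .
qed

lemma summable_mittag_leffler:
  fixes b z :: real
  assumes b: "0 < b" "b \<le> 1"
  shows "summable (\<lambda>l. z ^ l / Gamma (1 + real l * b))"
proof -
  obtain N :: nat where N: "(4 * \<bar>z\<bar> + 1) powr (1 / b) / b < real N"
    using reals_Archimedean2 by blast
  show ?thesis
  proof (rule summable_ratio_test[of "1 / 2" N])
    fix l assume l: "N \<le> l"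
    define x where "x = 1 + real l * b"
    have "x \<ge> 1"
      using b by (simp add: x_def)
    then have x: "x \<ge> 1" "Gamma x > 0" "Gamma (x + b) > 0"
      using b by simp_all
    have "(4 * \<bar>z\<bar> + 1) powr (1 / b) < real N * b"
      using N b by (simp add: divide_less_eq)
    also have "\<dots> \<le> real l * b"
      using l b by (intro mult_right_mono) auto
    also have "\<dots> \<le> x"
      by (simp add: x_def)
    finally have "((4 * \<bar>z\<bar> + 1) powr (1 / b)) powr b \<le> x powr b"
      using b by (intro powr_mono2) auto
    then have "4 * \<bar>z\<bar> + 1 \<le> x powr b"
      using b by (simp add: powr_powr)
    then have "4 * \<bar>z\<bar> * Gamma x \<le> x powr b * Gamma x"
      using x(2) by (intro mult_right_mono) auto
    then have "2 * \<bar>z\<bar> * Gamma x \<le> Gamma x * x powr b / 2"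
      by (simp add: mult_ac)
    also have "\<dots> \<le> Gamma (x + b)"
      using x(1) b by (intro Gamma_add_ge_half_powr) auto
    finally have "\<bar>z\<bar> ^ l * (2 * \<bar>z\<bar> * Gamma x) \<le> \<bar>z\<bar> ^ l * Gamma (x + b)"
      by (simp add: mult_left_mono)
    then have "\<bar>z\<bar> ^ Suc l / Gamma (x + b) \<le> 1 / 2 * (\<bar>z\<bar> ^ l / Gamma x)"
      using x by (simp add: field_simps)
    moreover have "1 + real (Suc l) * b = x + b"
      by (simp add: x_def algebra_simps)
    ultimately show "norm (z ^ Suc l / Gamma (1 + real (Suc l) * b)) \<le> 1 / 2 * norm (z ^ l / Gamma (1 + real l * b))"
      using x unfolding x_def[symmetric] by (simp add: abs_mult power_abs)
  qed simp
qed

lemma mittag_leffler_ge_rho_convolution: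
  fixes b \<tau> \<mu> :: real
  assumes b: "0 < b" "b < 1" and n: "n \<ge> 1" and \<tau>: "\<tau> > 0" and \<mu>: "\<mu> \<ge> 0"
  shows "1 + \<mu> * \<tau> powr b * (\<Sum>i\<in>{1..<n}. rho b i * mittag_leffler b (\<mu> * (real (n - i) * \<tau>) powr b))
         \<le> mittag_leffler b (\<mu> * (real n * \<tau>) powr b)"
proof -
  define t where "t z = (\<lambda>l::nat. z ^ l / Gamma (1 + real l * b))" for z
  define z where "z k = (real k * \<tau>) powr b" for k :: nat
  have summable: "summable (t w)" for w
    unfolding t_def using b by (intro summable_mittag_leffler) auto
  have mittag_leffler_eq: "mittag_leffler b w = suminf (t w)" for w
    by (simp add: mittag_leffler_def t_def)
  have termwise: "\<mu> * \<tau> powr b * (\<Sum>i\<in>{1..<n}. rho b i * t (\<mu> * z (n - i)) l) \<le> t (\<mu> * z n) (Suc l)" for l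
  proof -
    have "\<mu> * \<tau> powr b * (\<Sum>i\<in>{1..<n}. rho b i * t (\<mu> * z (n - i)) l)
        = \<mu> ^ Suc l * (\<tau> powr b * (\<Sum>i\<in>{1..<n}. rho b i * z (n - i) ^ l / Gamma (1 + real l * b)))"
      by (simp add: t_def sum_distrib_left power_mult_distrib algebra_simps)
    also have "\<dots> \<le> \<mu> ^ Suc l * (z n ^ Suc l / Gamma (1 + real (Suc l) * b))"
      unfolding z_def using \<mu> by (intro mult_left_mono rho_convolution_powr_le b n \<tau>) auto
    also have "\<dots> = t (\<mu> * z n) (Suc l)"
      by (simp add: t_def power_mult_distrib)
    finally show ?thesis .
  qed
  have "\<mu> * \<tau> powr b * (\<Sum>i\<in>{1..<n}. rho b i * suminf (t (\<mu> * z (n - i))))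
      = (\<Sum>l. \<mu> * \<tau> powr b * (\<Sum>i\<in>{1..<n}. rho b i * t (\<mu> * z (n - i)) l))"
    using summable by (simp add: suminf_mult suminf_sum summable_mult summable_sum)
  also have "\<dots> \<le> (\<Sum>l. t (\<mu> * z n) (Suc l))"
    using summable termwise
    by (intro suminf_le) (auto simp: summable_mult summable_sum summable_Suc_iff)
  also have "\<dots> = suminf (t (\<mu> * z n)) - 1"
    using suminf_split_head[OF summable] by (simp add: t_def)
  finally show ?thesis
    by (simp add: mittag_leffler_eq z_def)
qed

definition running_max :: "(nat \<Rightarrow> real) \<Rightarrow> nat \<Rightarrow> real" where
  "running_max v n = Max (v ` {1..n})"

lemma le_running_max: "1 \<le> l \<Longrightarrow> l \<le> n \<Longrightarrow> v l \<le> running_max v n"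
  unfolding running_max_def by (rule Max_ge) auto

lemma running_max_mono: "1 \<le> m \<Longrightarrow> m \<le> n \<Longrightarrow> running_max v m \<le> running_max v n"
  unfolding running_max_def by (rule Max_mono) auto

lemma running_max_attained:
  assumes "1 \<le> n"
  obtains m where "m \<in> {1..n}" "running_max v n = v m"
proof -
  have "Max (v ` {1..n}) \<in> v ` {1..n}"
    using assms by (intro Max_in) auto
  then show ?thesis
    using that unfolding running_max_def by blast
qed

lemma memory_sum_le_running_max:
  fixes lam v :: "nat \<Rightarrow> real"
  assumes k: "1 \<le> k" and lam: "\<And>l. l < k \<Longrightarrow> 0 \<le> lam l" "(\<Sum>l<k. lam l) \<le> \<Lambda>"
    and v: "\<And>l. 1 \<le> l \<Longrightarrow> l \<le> k \<Longrightarrow> 0 \<le> v l"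
  shows "(\<Sum>l=1..k. lam (k - l) * v l) \<le> \<Lambda> * running_max v k"
proof -
  have "(\<Sum>l=1..k. lam (k - l) * v l) \<le> (\<Sum>l=1..k. lam (k - l) * running_max v k)"
    using lam(1) by (intro sum_mono mult_left_mono le_running_max) auto
  also have "\<dots> = (\<Sum>l<k. lam l) * running_max v k"
    by (subst atLeast0LessThan[symmetric], subst sum.atLeastLessThan_rev_at_least_Suc_atMost)
      (simp add: sum_distrib_right)
  also have "\<dots> \<le> \<Lambda> * running_max v k"
    using lam(2) v[OF k order_refl] le_running_max[OF k order_refl, of v]
    by (intro mult_right_mono) auto
  finally show ?thesis .
qed

lemma frac_diff_le_imp_le_convolution:
  fixes v g lam :: "nat \<Rightarrow> real"
  assumes b: "0 < b" and \<tau>: "\<tau> > 0" and m: "1 \<le> m"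
    and lam: "\<And>l. l < m \<Longrightarrow> 0 \<le> lam l" "\<And>k. 1 \<le> k \<Longrightarrow> k \<le> m \<Longrightarrow> (\<Sum>l=0..k-1. lam l) \<le> \<Lambda>"
    and v: "\<And>k. 1 \<le> k \<Longrightarrow> k \<le> m \<Longrightarrow> 0 \<le> v k" and g: "0 \<le> g 0"
    and ineq: "\<And>k. 1 \<le> k \<Longrightarrow> k \<le> m \<Longrightarrow> frac_diff b \<tau> v k \<le> (\<Sum>l=1..k. lam (k - l) * v l) + g k"
  shows "v m \<le> v 0 + (\<Sum>j=0..m. \<tau> powr b * rho b (m - j) * g j)
           + \<Lambda> * \<tau> powr b * (\<Sum>i<m. rho b i * running_max v (m - i))"
proof -
  have memory: "(\<Sum>l=1..k. lam (k - l) * v l) \<le> \<Lambda> * running_max v k" if "1 \<le> k" "k \<le> m" for k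
  proof (rule memory_sum_le_running_max)
    show "(\<Sum>l<k. lam l) \<le> \<Lambda>"
      using lam(2)[OF that] that by (simp add: atLeast0AtMost lessThan_Suc_atMost[symmetric])
  qed (use that lam(1) v in auto)
  have bound: "frac_diff b \<tau> v k \<le> \<Lambda> * running_max v k + g k" if "1 \<le> k" "k \<le> m" for k
    using ineq[OF that] memory[OF that] by linarith
  have "v m - v 0 = \<tau> powr b * (\<Sum>k=1..m. rho b (m - k) * frac_diff b \<tau> v k)"
    using frac_diff_inversion[OF \<tau>] by simp
  also have "\<dots> \<le> \<tau> powr b * (\<Sum>k=1..m. rho b (m - k) * (\<Lambda> * running_max v k + g k))"
    using bound rho_nonneg[OF b] \<tau> by (intro mult_left_mono sum_mono) auto
  also have "\<dots> = \<Lambda> * \<tau> powr b * (\<Sum>k=1..m. rho b (m - k) * running_max v k)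
      + (\<Sum>k=1..m. \<tau> powr b * rho b (m - k) * g k)"
    by (simp add: sum.distrib sum_distrib_left algebra_simps)
  also have "(\<Sum>k=1..m. rho b (m - k) * running_max v k) = (\<Sum>i<m. rho b i * running_max v (m - i))"
    by (subst atLeast0LessThan[symmetric], subst sum.atLeastLessThan_rev_at_least_Suc_atMost)
      (auto intro: sum.cong)
  also have "(\<Sum>k=1..m. \<tau> powr b * rho b (m - k) * g k) \<le> (\<Sum>j=0..m. \<tau> powr b * rho b (m - j) * g j)"
    using g rho_nonneg[OF b] by (simp add: sum.atLeast_Suc_atMost[of 0 m] flip: One_nat_def)
  finally show ?thesis
    by simp
qed

lemma running_max_le_rho_convolution:
  fixes v :: "nat \<Rightarrow> real"
  assumes b: "0 < b" and c: "0 \<le> c" "c \<le> 1 / 2"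
    and v: "\<And>k. 1 \<le> k \<Longrightarrow> k \<le> K \<Longrightarrow> 0 \<le> v k"
    and le: "\<And>m. 1 \<le> m \<Longrightarrow> m \<le> K \<Longrightarrow> v m \<le> F + c * (\<Sum>i<m. rho b i * running_max v (m - i))"
    and n: "1 \<le> n" "n \<le> K"
  shows "running_max v n \<le> 2 * F + 2 * c * (\<Sum>i\<in>{1..<n}. rho b i * running_max v (n - i))"
proof -
  obtain m where m: "m \<in> {1..n}" "running_max v n = v m"
    using running_max_attained[OF n(1)] .
  have max_nonneg: "0 \<le> running_max v k" if "1 \<le> k" "k \<le> K" for k
    using v[OF that] le_running_max[OF that(1) order_refl, of v] by linarith
  have "(\<Sum>i<m. rho b i * running_max v (m - i)) \<le> (\<Sum>i<m. rho b i * running_max v (n - i))"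
    using m rho_nonneg[OF b] by (intro sum_mono mult_left_mono running_max_mono) auto
  also have "\<dots> \<le> (\<Sum>i<n. rho b i * running_max v (n - i))"
    using m n rho_nonneg[OF b] max_nonneg by (intro sum_mono2) auto
  also have "\<dots> = running_max v n + (\<Sum>i\<in>{1..<n}. rho b i * running_max v (n - i))"
    using n by (simp add: lessThan_atLeast0 sum.atLeast_Suc_lessThan flip: One_nat_def)
  finally have "c * (\<Sum>i<m. rho b i * running_max v (m - i))
      \<le> c * (running_max v n + (\<Sum>i\<in>{1..<n}. rho b i * running_max v (n - i)))"
    using c by (intro mult_left_mono) auto
  then have "running_max v n \<le> F + c * running_max v n + c * (\<Sum>i\<in>{1..<n}. rho b i * running_max v (n - i))"
    using le[of m] m n by (simp add: distrib_left)
  moreover have "c * running_max v n \<le> running_max v n / 2"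
    using mult_right_mono[OF c(2) max_nonneg[OF n]] by simp
  ultimately show ?thesis
    by linarith
qed

lemma discrete_gronwall_mittag_leffler:
  fixes W :: "nat \<Rightarrow> real"
  assumes b: "0 < b" "b < 1" and \<tau>: "\<tau> > 0" and \<mu>: "\<mu> \<ge> 0" and A: "A \<ge> 0"
    and W: "\<And>n. 1 \<le> n \<Longrightarrow> n \<le> K \<Longrightarrow> W n \<le> A + \<mu> * \<tau> powr b * (\<Sum>i\<in>{1..<n}. rho b i * W (n - i))"
  shows "1 \<le> n \<Longrightarrow> n \<le> K \<Longrightarrow> W n \<le> A * mittag_leffler b (\<mu> * (real n * \<tau>) powr b)"
proof (induction n rule: less_induct)
  case (less n)
  have IH: "W (n - i) \<le> A * mittag_leffler b (\<mu> * (real (n - i) * \<tau>) powr b)" if "i \<in> {1..<n}" for i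
    using less.IH[of "n - i"] less.prems that by auto
  have "(\<Sum>i\<in>{1..<n}. rho b i * W (n - i))
      \<le> (\<Sum>i\<in>{1..<n}. rho b i * (A * mittag_leffler b (\<mu> * (real (n - i) * \<tau>) powr b)))"
    using IH rho_nonneg[OF b(1)] by (intro sum_mono mult_left_mono) auto
  then have "\<mu> * \<tau> powr b * (\<Sum>i\<in>{1..<n}. rho b i * W (n - i))
      \<le> \<mu> * \<tau> powr b * (\<Sum>i\<in>{1..<n}. rho b i * (A * mittag_leffler b (\<mu> * (real (n - i) * \<tau>) powr b)))"
    using \<mu> by (intro mult_left_mono) auto
  then have "W n \<le> A + \<mu> * \<tau> powr b * (\<Sum>i\<in>{1..<n}. rho b i * (A * mittag_leffler b (\<mu> * (real (n - i) * \<tau>) powr b)))"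
    using W[OF less.prems] by linarith
  also have "\<dots> = A * (1 + \<mu> * \<tau> powr b * (\<Sum>i\<in>{1..<n}. rho b i * mittag_leffler b (\<mu> * (real (n - i) * \<tau>) powr b)))"
    by (simp add: sum_distrib_left algebra_simps)
  also have "\<dots> \<le> A * mittag_leffler b (\<mu> * (real n * \<tau>) powr b)"
    using A b \<tau> \<mu> less.prems by (intro mult_left_mono mittag_leffler_ge_rho_convolution) auto
  finally show ?case .
qed

theorem corollary2p1:
  fixes \<beta> T \<tau> \<Lambda> :: real and nT :: nat
    and g lam v :: "nat \<Rightarrow> real"
  assumes "0 < \<beta>" "\<beta> < 1" "0 < T" "0 < nT"
    and "\<tau> = T / real nT"
    and "\<forall>k\<le>nT. 0 \<le> g k"
    and "\<forall>l<nT. 0 \<le> lam l"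
    and "\<forall>k. 1 \<le> k \<and> k \<le> nT \<longrightarrow> (\<Sum>l=0..k-1. lam l) \<le> \<Lambda>"
    and "\<tau> powr \<beta> * (2 * \<Lambda> * (1 + \<beta>)) \<le> 1"
    and "\<forall>k\<le>nT. 0 \<le> v k"
    and "\<forall>k. 1 \<le> k \<and> k \<le> nT \<longrightarrow>
           frac_diff \<beta> \<tau> v k \<le> (\<Sum>l=1..k. lam (k - l) * v l) + g k"
  shows "\<forall>k. 1 \<le> k \<and> k \<le> nT \<longrightarrow>
           v k \<le> 2 * mittag_leffler \<beta> (2 * \<Lambda> * (real k * \<tau>) powr \<beta>) *
             (v 0 + (MAX m\<in>{1..k}. \<Sum>j=0..m. \<tau> powr \<beta> * rho \<beta> (m - j) * g j))"
proof (intro allI impI)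
  fix K assume K: "1 \<le> K \<and> K \<le> nT"
  have \<beta>: "0 < \<beta>" "\<beta> < 1" and \<tau>: "\<tau> > 0"
    using assms(1-5) by auto
  have \<Lambda>: "\<Lambda> \<ge> 0"
    using assms(4) assms(7)[rule_format, of 0] assms(8)[rule_format, of 1] by simp
  define c where "c = \<Lambda> * \<tau> powr \<beta>"
  have c0: "0 \<le> c"
    using \<Lambda> by (simp add: c_def)
  \<comment> \<open>the step-size condition is only used in this weaker form\<close>
  have c_half: "c \<le> 1 / 2"
    using assms(9) mult_nonneg_nonneg[OF c0, of \<beta>] \<beta> by (auto simp: c_def algebra_simps)
  define F where "F = v 0 + (MAX m\<in>{1..K}. \<Sum>j=0..m. \<tau> powr \<beta> * rho \<beta> (m - j) * g j)"
  have source_le_max: "(\<Sum>j=0..m. \<tau> powr \<beta> * rho \<beta> (m - j) * g j) \<le> F - v 0" if "m \<in> {1..K}" for m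
    unfolding F_def using that by (simp add: Max_ge)
  have "0 \<le> (\<Sum>j=0..K. \<tau> powr \<beta> * rho \<beta> (K - j) * g j)"
    using assms(6) K rho_nonneg[OF \<beta>(1)] by (intro sum_nonneg) auto
  then have F: "0 \<le> F"
    using source_le_max[of K] assms(10) K by auto
  have "v m \<le> F + c * (\<Sum>i<m. rho \<beta> i * running_max v (m - i))" if "1 \<le> m" "m \<le> K" for m
    using frac_diff_le_imp_le_convolution[OF \<beta>(1) \<tau> that(1), of lam \<Lambda> v g] source_le_max[of m] that K assms(6-11)
    by (auto simp: c_def)
  then have "running_max v n \<le> 2 * F + 2 * \<Lambda> * \<tau> powr \<beta> * (\<Sum>i\<in>{1..<n}. rho \<beta> i * running_max v (n - i))"
    if "1 \<le> n" "n \<le> K" for n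
    using running_max_le_rho_convolution[OF \<beta>(1) c0 c_half, of K v F n] that K assms(10) by (simp add: c_def)
  then have "running_max v K \<le> 2 * F * mittag_leffler \<beta> (2 * \<Lambda> * (real K * \<tau>) powr \<beta>)"
    using discrete_gronwall_mittag_leffler[OF \<beta> \<tau>, of "2 * \<Lambda>" "2 * F" K "running_max v" K] \<Lambda> F K by simp
  then show "v K \<le> 2 * mittag_leffler \<beta> (2 * \<Lambda> * (real K * \<tau>) powr \<beta>) *
             (v 0 + (MAX m\<in>{1..K}. \<Sum>j=0..m. \<tau> powr \<beta> * rho \<beta> (m - j) * g j))"
    using le_running_max[of K K v] K by (simp add: F_def algebra_simps)
qed

end
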